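(* Suppose $W^+$ is inverse S-shaped (with $W^+(0)=0$, $W^+(1)=1$). Then there exists a unique index $J'\in\{1,\dots,n^+\}$ such that $$h^+_{n^+}>h^+_{n^+-1}>\cdots>h^+_{J'}\quad\text{and}\quad h^+_{J'}\le h^+_{J'-1}<h^+_{J'-2}<\cdots<h^+_1$$ (such $J'$ is called the flexional index).
   Context: Fix $N\in\mathbb{N}$ and an integer $1\le n^+\le N$. A function $f:[0,1]\to\mathbb{R}$ is inverse S-shaped if it is strictly increasing, continuously differentiable, and there is $x_0\in[0,1]$ such that $f'$ is strictly decreasing on $[0,x_0]$ and strictly increasing on $[x_0,1]$. $W^+:[0,1]\to[0,1]$ is such a function with $W^+(0)=0$, $W^+(1)=1$, and $h^+_j:=W^+\!\left(\frac{n^+-j+1}{N}\right)-W^+\!\left(\frac{n^+-j}{N}\right)$ for $j=1,\dots,n^+$. Chains of inequalities with no terms are vacuous (e.g. the second chain when $J'=1$). *)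

theory Defs
  imports "HOL-Analysis.Analysis"
begin

definition inverse_S_shaped :: "(real \<Rightarrow> real) \<Rightarrow> bool" where
  "inverse_S_shaped f \<longleftrightarrow>
     strict_mono_on {0..1} f \<and>
     (\<exists>f'. (\<forall>x\<in>{0..1}. (f has_real_derivative f' x) (at x within {0..1})) \<and>
           continuous_on {0..1} f' \<and>
           (\<exists>x0\<in>{0..1}.
              (\<forall>x\<in>{0..x0}. \<forall>y\<in>{0..x0}. x < y \<longrightarrow> f' y < f' x) \<and>
              (\<forall>x\<in>{x0..1}. \<forall>y\<in>{x0..1}. x < y \<longrightarrow> f' x < f' y)))"

definition hplus :: "(real \<Rightarrow> real) \<Rightarrow> nat \<Rightarrow> nat \<Rightarrow> nat \<Rightarrow> real" where
  "hplus W N n j = W ((real n - real j + 1) / real N) - W ((real n - real j) / real N)"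

end

theory Submission
  imports Defs
begin

text \<open>An inverse S-shaped W has a strictly quasiconvex derivative W': on every interval its
  interior values stay below the larger endpoint value. By the mean value theorem each increment
  of W over a grid cell is the cell width times W' at an interior point, so once two consecutive
  increments weakly rise, the next one rises strictly. Read along the reversed index j of h_j,
  a weak descent at j thus forces a strict descent at j - 1, so the weak descents form an initial
  segment; the flexional index is one past the last of them.\<close>

definition flexional_index :: "(nat \<Rightarrow> 'a::linorder) \<Rightarrow> nat \<Rightarrow> nat \<Rightarrow> bool" where
  "flexional_index h n J \<longleftrightarrow> J \<in> {1..n} \<and>
     (\<forall>j. J \<le> j \<and> j < n \<longrightarrow> h (j + 1) > h j) \<and>
     (2 \<le> J \<longrightarrow> h J \<le> h (J - 1)) \<and>
     (\<forall>j. 1 \<le> j \<and> j + 2 \<le> J \<longrightarrow> h (j + 1) < h j)"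

lemma flexional_index_le:
  assumes "flexional_index h n J" and "flexional_index h n J'"
  shows "J' \<le> J"
proof (rule ccontr)
  assume "\<not> J' \<le> J"
  then have "J \<le> J' - 1" "J' - 1 < n" "2 \<le> J'" "J' - 1 + 1 = J'"
    using assms by (auto simp: flexional_index_def)
  then have "h J' > h (J' - 1)" and "h J' \<le> h (J' - 1)"
    using assms unfolding flexional_index_def by metis+
  then show False by simp
qed

lemma flexional_index_exists:
  fixes h :: "nat \<Rightarrow> 'a::linorder"
  assumes "1 \<le> n"
    and descent_propagates: "\<And>j. 2 \<le> j \<Longrightarrow> j < n \<Longrightarrow> h (j + 1) \<le> h j \<Longrightarrow> h j < h (j - 1)"
  shows "\<exists>J. flexional_index h n J"
proof -
  define S where "S = {j \<in> {1..<n}. h (j + 1) \<le> h j}"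
  define m where "m = Max (insert 0 S)"
  have "finite S" by (simp add: S_def)
  then have m_in: "m \<in> insert 0 S" and m_max: "\<And>j. j \<in> S \<Longrightarrow> j \<le> m"
    unfolding m_def using Max_in[of "insert 0 S"] Max_ge[of "insert 0 S"] by simp_all
  have m_lt: "m < n" using m_in assms(1) by (auto simp: S_def)
  have weak: "h (i + 1) \<le> h i" if "1 \<le> i" "i \<le> m" for i
    using \<open>i \<le> m\<close>
  proof (induction rule: inc_induct)
    case base
    then show ?case using m_in that by (simp add: S_def)
  next
    case (step k)
    then have "h (k + 1) < h (k + 1 - 1)"
      using descent_propagates[of "k + 1"] m_lt that(1) by simp
    then show ?case by simp
  qed
  have "flexional_index h n (m + 1)"
    unfolding flexional_index_def
  proof (intro conjI allI impI)
    show "m + 1 \<in> {1..n}" using m_lt by simp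
  next
    fix j assume "m + 1 \<le> j \<and> j < n"
    then have "j \<notin> S" using m_max by fastforce
    then show "h (j + 1) > h j" using \<open>m + 1 \<le> j \<and> j < n\<close> by (auto simp: S_def)
  next
    assume "2 \<le> m + 1"
    then show "h (m + 1) \<le> h (m + 1 - 1)" using weak[of m] by simp
  next
    fix j assume "1 \<le> j \<and> j + 2 \<le> m + 1"
    then show "h (j + 1) < h j"
      using descent_propagates[of "j + 1"] weak[of "j + 1"] m_lt by simp
  qed
  then show ?thesis ..
qed

lemma ex1_flexional_index:
  fixes h :: "nat \<Rightarrow> 'a::linorder"
  assumes "1 \<le> n"
    and "\<And>j. 2 \<le> j \<Longrightarrow> j < n \<Longrightarrow> h (j + 1) \<le> h j \<Longrightarrow> h j < h (j - 1)"
  shows "\<exists>!J. flexional_index h n J"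
  using flexional_index_exists[of n h] assms flexional_index_le antisym by metis

lemma real_mvt_within:
  fixes f D :: "real \<Rightarrow> real"
  assumes "a < b" and "{a..b} \<subseteq> S"
    and der: "\<And>x. x \<in> S \<Longrightarrow> (f has_real_derivative D x) (at x within S)"
  obtains \<xi> where "a < \<xi>" "\<xi> < b" "f b - f a = (b - a) * D \<xi>"
proof -
  have "\<exists>\<xi>\<in>{a<..<b}. f b - f a = (\<lambda>t. D \<xi> * t) (b - a)"
  proof (rule mvt_simple[OF \<open>a < b\<close>])
    fix x assume "a \<le> x" "x \<le> b"
    then have "x \<in> S" using assms(2) by auto
    then have "(f has_real_derivative D x) (at x within {a..b})"
      using DERIV_subset der assms(2) by blast
    then show "(f has_derivative (\<lambda>t. D x * t)) (at x within {a..b})"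
      by (simp add: has_field_derivative_def)
  qed
  then obtain \<xi> where "\<xi> \<in> {a<..<b}" "f b - f a = D \<xi> * (b - a)" by auto
  then show ?thesis using that[of \<xi>] by (simp add: mult.commute)
qed

lemma increments_rise_strictly_after_rise:
  fixes f D :: "real \<Rightarrow> real"
  assumes der: "\<And>x. x \<in> {a..b} \<Longrightarrow> (f has_real_derivative D x) (at x within {a..b})"
    and quasiconvex: "\<And>x y z. a \<le> x \<Longrightarrow> x < y \<Longrightarrow> y < z \<Longrightarrow> z \<le> b \<Longrightarrow> D y < max (D x) (D z)"
    and "a \<le> p" "0 < d" "p + 3 * d \<le> b"
    and rise: "f (p + d) - f p \<le> f (p + 2 * d) - f (p + d)"
  shows "f (p + 2 * d) - f (p + d) < f (p + 3 * d) - f (p + 2 * d)"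
proof -
  have cell: "\<exists>\<xi>. x < \<xi> \<and> \<xi> < x + d \<and> f (x + d) - f x = d * D \<xi>"
    if "a \<le> x" "x + d \<le> b" for x
    by (rule real_mvt_within[OF _ _ der, of x "x + d"]) (use that \<open>0 < d\<close> in auto)
  have shift: "p + d + d = p + 2 * d" "p + 2 * d + d = p + 3 * d" by simp_all
  obtain \<xi>\<^sub>0 where \<xi>\<^sub>0: "p < \<xi>\<^sub>0" "\<xi>\<^sub>0 < p + d" "f (p + d) - f p = d * D \<xi>\<^sub>0"
    using cell[of p] assms(3-5) by auto
  have "a \<le> p + d" "p + d + d \<le> b" using assms(3-5) by simp_all
  then obtain \<xi>\<^sub>1 where
      \<xi>\<^sub>1: "p + d < \<xi>\<^sub>1" "\<xi>\<^sub>1 < p + 2 * d" "f (p + 2 * d) - f (p + d) = d * D \<xi>\<^sub>1"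
    using cell[of "p + d"] unfolding shift by blast
  have "a \<le> p + 2 * d" "p + 2 * d + d \<le> b" using assms(3-5) by simp_all
  then obtain \<xi>\<^sub>2 where
      \<xi>\<^sub>2: "p + 2 * d < \<xi>\<^sub>2" "\<xi>\<^sub>2 < p + 3 * d" "f (p + 3 * d) - f (p + 2 * d) = d * D \<xi>\<^sub>2"
    using cell[of "p + 2 * d"] unfolding shift by blast
  have "D \<xi>\<^sub>0 \<le> D \<xi>\<^sub>1"
    using rise \<xi>\<^sub>0(3) \<xi>\<^sub>1(3) \<open>0 < d\<close> by simp
  moreover have "D \<xi>\<^sub>1 < max (D \<xi>\<^sub>0) (D \<xi>\<^sub>2)"
    by (rule quasiconvex) (use \<xi>\<^sub>0 \<xi>\<^sub>1 \<xi>\<^sub>2 assms(3-5) in linarith)+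
  ultimately have "D \<xi>\<^sub>1 < D \<xi>\<^sub>2" by linarith
  then show ?thesis using \<xi>\<^sub>1(3) \<xi>\<^sub>2(3) \<open>0 < d\<close> by simp
qed

lemma inverse_S_shaped_deriv_quasiconvex:
  assumes "inverse_S_shaped W"
  obtains D where "\<And>x. x \<in> {0..1} \<Longrightarrow> (W has_real_derivative D x) (at x within {0..1})"
    and "\<And>x y z. 0 \<le> x \<Longrightarrow> x < y \<Longrightarrow> y < z \<Longrightarrow> z \<le> 1 \<Longrightarrow> D y < max (D x) (D z)"
proof -
  obtain D x\<^sub>0 where der: "\<forall>x\<in>{0..1}. (W has_real_derivative D x) (at x within {0..1})"
    and dec: "\<forall>x\<in>{0..x\<^sub>0}. \<forall>y\<in>{0..x\<^sub>0}. x < y \<longrightarrow> D y < D x"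
    and inc: "\<forall>x\<in>{x\<^sub>0..1}. \<forall>y\<in>{x\<^sub>0..1}. x < y \<longrightarrow> D x < D y"
    using assms unfolding inverse_S_shaped_def by blast
  have "D y < max (D x) (D z)" if "0 \<le> x" "x < y" "y < z" "z \<le> 1" for x y z
  proof (cases "y \<le> x\<^sub>0")
    case True
    then have "x \<in> {0..x\<^sub>0}" "y \<in> {0..x\<^sub>0}" using that by simp_all
    then have "D y < D x" using dec \<open>x < y\<close> by blast
    then show ?thesis by simp
  next
    case False
    then have "y \<in> {x\<^sub>0..1}" "z \<in> {x\<^sub>0..1}" using that by simp_all
    then have "D y < D z" using inc \<open>y < z\<close> by blast
    then show ?thesis by simp
  qed
  then show ?thesis using der that by blast
qed

lemma hplus_descent_propagates:
  assumes "n \<le> N" and "inverse_S_shaped W" and "2 \<le> j" "j < n"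
    and "hplus W N n (j + 1) \<le> hplus W N n j"
  shows "hplus W N n j < hplus W N n (j - 1)"
proof -
  obtain D where der: "\<And>x. x \<in> {0..1} \<Longrightarrow> (W has_real_derivative D x) (at x within {0..1})"
    and quasiconvex: "\<And>x y z. 0 \<le> x \<Longrightarrow> x < y \<Longrightarrow> y < z \<Longrightarrow> z \<le> 1 \<Longrightarrow> D y < max (D x) (D z)"
    using inverse_S_shaped_deriv_quasiconvex[OF assms(2)] by blast
  define p where "p = (real n - real j - 1) / real N"
  define d where "d = 1 / real N"
  have "real N > 0" using assms by simp
  have grid: "(real n - real (j + 1)) / real N = p"
    "(real n - real (j + 1) + 1) / real N = p + d"
    "(real n - real j) / real N = p + d"
    "(real n - real j + 1) / real N = p + 2 * d"
    "(real n - real (j - 1)) / real N = p + 2 * d"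
    "(real n - real (j - 1) + 1) / real N = p + 3 * d"
    unfolding p_def d_def using \<open>real N > 0\<close> \<open>2 \<le> j\<close> by (simp_all add: field_simps of_nat_diff)
  have "0 \<le> p" using assms \<open>real N > 0\<close> by (simp add: p_def)
  moreover have "0 < d" using \<open>real N > 0\<close> by (simp add: d_def)
  moreover have "p + 3 * d \<le> 1"
    using assms \<open>real N > 0\<close> by (simp add: p_def d_def field_simps)
  moreover have "W (p + d) - W p \<le> W (p + 2 * d) - W (p + d)"
    using assms(5) unfolding hplus_def grid .
  ultimately show ?thesis
    using increments_rise_strictly_after_rise[OF der quasiconvex] unfolding hplus_def grid
    by blast
qed

theorem lemma1:
  fixes W :: "real \<Rightarrow> real" and N n :: nat
  assumes "1 \<le> n" and "n \<le> N"
    and "inverse_S_shaped W" and "W 0 = 0" and "W 1 = 1"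
  shows "\<exists>!J. J \<in> {1..n} \<and>
           (\<forall>j. J \<le> j \<and> j < n \<longrightarrow> hplus W N n (j + 1) > hplus W N n j) \<and>
           (2 \<le> J \<longrightarrow> hplus W N n J \<le> hplus W N n (J - 1)) \<and>
           (\<forall>j. 1 \<le> j \<and> j + 2 \<le> J \<longrightarrow> hplus W N n (j + 1) < hplus W N n j)"
  using ex1_flexional_index[of n "hplus W N n", OF assms(1) hplus_descent_propagates[OF assms(2,3)]]
  unfolding flexional_index_def .

end
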